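(* Let $H$ be a finite-dimensional real Hilbert space and let $A = A_1 + A_2$, where $A_1, A_2: H\to H$ are linear operators with $A_1 = A_2^*$, and $A=A^*>0$. Let $\sigma\ge 1/4$, $\tau>0$, let $y^0,y^1\in H$ be arbitrary and $\varphi^n\in H$. Let $y^{n+1}$, $n\ge1$, be defined by the scheme $$G\,\frac{y^{n+1}-2y^n+y^{n-1}}{\tau^2} + A y^n = \varphi^n,\quad n=1,2,\dots,\qquad G = (E+\sigma\tau^2A_1)(E+\sigma\tau^2A_2).$$ Define $$R = E + \Big(\sigma-\frac14\Big)\tau^2 A + \sigma^2\tau^4 A_1A_2,\qquad \mathcal{E}_{n} = \left\|\frac{y^{n}+y^{n-1}}{2}\right\|_A^2 + \left\|\frac{y^{n}-y^{n-1}}{\tau}\right\|_{R}^2,\quad n\ge1 .$$ Then $R = R^* \ge E$, and for every $n\ge1$, regardless of $\tau$, $$\mathcal{E}_{n+1} \le \exp(\tau)\,\mathcal{E}_n + \exp(0.75\,\tau)\,\tau\,\|\varphi^n\|^2_{R^{-1}} .$$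
   Context: $H$ has scalar product $(\cdot,\cdot)$ and norm $\|y\|=(y,y)^{1/2}$; $A^*$ denotes the adjoint. For a self-adjoint positive definite operator $D$ on $H$, $\|y\|_D = (Dy,y)^{1/2}$; in particular $\|\varphi\|^2_{R^{-1}} = (R^{-1}\varphi,\varphi)$. $E$ denotes the identity operator on $H$, and $D_1\ge D_2$ means $(D_1y,y)\ge(D_2y,y)$ for all $y\in H$. *)

theory Defs
  imports "HOL-Analysis.Analysis"
begin

definition sqnorm_op :: "('a::real_inner \<Rightarrow> 'a) \<Rightarrow> 'a \<Rightarrow> real" where
  "sqnorm_op D y = inner (D y) y"

definition op_ge :: "('a::real_inner \<Rightarrow> 'a) \<Rightarrow> ('a \<Rightarrow> 'a) \<Rightarrow> bool" where
  "op_ge D1 D2 \<longleftrightarrow> (\<forall>y. inner (D1 y) y \<ge> inner (D2 y) y)"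

definition pos_def_op :: "('a::real_inner \<Rightarrow> 'a) \<Rightarrow> bool" where
  "pos_def_op D \<longleftrightarrow> (\<forall>y. y \<noteq> 0 \<longrightarrow> inner (D y) y > 0)"

definition G_op :: "real \<Rightarrow> real \<Rightarrow> ('a::real_vector \<Rightarrow> 'a) \<Rightarrow> ('a \<Rightarrow> 'a) \<Rightarrow> 'a \<Rightarrow> 'a" where
  "G_op \<sigma> \<tau> A1 A2 = (\<lambda>v. let w = v + (\<sigma> * \<tau>^2) *\<^sub>R A2 v in w + (\<sigma> * \<tau>^2) *\<^sub>R A1 w)"

definition R_op :: "real \<Rightarrow> real \<Rightarrow> ('a::real_vector \<Rightarrow> 'a) \<Rightarrow> ('a \<Rightarrow> 'a) \<Rightarrow> 'a \<Rightarrow> 'a" where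
  "R_op \<sigma> \<tau> A1 A2 = (\<lambda>v. v + ((\<sigma> - 1/4) * \<tau>^2) *\<^sub>R (A1 v + A2 v)
                                + (\<sigma>^2 * \<tau>^4) *\<^sub>R A1 (A2 v))"

definition energy :: "real \<Rightarrow> real \<Rightarrow> ('a::real_inner \<Rightarrow> 'a) \<Rightarrow> ('a \<Rightarrow> 'a) \<Rightarrow> (nat \<Rightarrow> 'a) \<Rightarrow> nat \<Rightarrow> real" where
  "energy \<sigma> \<tau> A1 A2 y n =
     sqnorm_op (\<lambda>v. A1 v + A2 v) ((1/2) *\<^sub>R (y n + y (n - 1)))
   + sqnorm_op (R_op \<sigma> \<tau> A1 A2) ((1/\<tau>) *\<^sub>R (y n - y (n - 1)))"

end

theory Submission
  imports Defs
begin

text \<open>Since G = R + (tau^2/4) A, the scheme reads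
  R y_tt + A (y(n+1) + 2 y(n) + y(n-1))/4 = phi(n) with R symmetric, R \<ge> E and A \<ge> 0.
  Testing it with y(n+1) - y(n-1) gives the exact balance
  E(n+1) = E(n) + (phi(n), y(n+1) - y(n-1)), and Cauchy-Schwarz in the R-inner product bounds
  the last term by tau a (sqrt E(n+1) + sqrt E(n)), where a is the norm of phi(n) with respect to inv R.
  Hence sqrt E(n+1) \<le> sqrt E(n) + tau a; squaring with Young's inequality of weight
  exp tau - 1 gives the claim, the factor exp (0.75 tau) coming from
  tau exp (tau/4) \<le> exp tau - 1.\<close>

lemma mult_exp_half_le_exp_minus_one:
  fixes t :: real
  assumes "0 \<le> t"
  shows "t * exp (t/2) \<le> exp t - 1"
proof -
  let ?h = "\<lambda>t::real. exp t - 1 - t * exp (t/2)"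
  have "?h 0 \<le> ?h t"
  proof (rule DERIV_nonneg_imp_nondecreasing[OF assms])
    fix s :: real
    have deriv: "(?h has_real_derivative exp s - (exp (s/2) + s * (exp (s/2) / 2))) (at s)"
      by (rule derivative_eq_intros refl | simp)+
    have "exp s = exp (s/2) * exp (s/2)"
      by (simp add: mult_exp_exp)
    then have "exp s - (exp (s/2) + s * (exp (s/2) / 2)) = exp (s/2) * (exp (s/2) - 1 - s/2)"
      by (simp add: algebra_simps)
    moreover have "0 \<le> exp (s/2) - 1 - s/2"
      using exp_ge_add_one_self[of "s/2"] by linarith
    ultimately show "\<exists>d. (?h has_real_derivative d) (at s) \<and> 0 \<le> d"
      using deriv by (metis exp_ge_zero mult_nonneg_nonneg)
  qed
  then show ?thesis
    by simp
qed

lemma le_add_of_square_le: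
  fixes X Y c :: real
  assumes "0 \<le> X" "0 \<le> Y" "0 \<le> c" and "X\<^sup>2 \<le> Y\<^sup>2 + c * (X + Y)"
  shows "X \<le> Y + c"
proof (cases "X + Y = 0")
  case False
  have "(X - Y) * (X + Y) \<le> c * (X + Y)"
    using assms(4) by (simp add: power2_eq_square algebra_simps)
  then show ?thesis
    using False assms(1,2) by (simp add: mult_le_cancel_right)
qed (use assms in auto)

lemma square_add_le_exp:
  fixes Y a t :: real
  assumes "0 \<le> Y" "0 < t"
  shows "(Y + t * a)\<^sup>2 \<le> exp t * Y\<^sup>2 + exp (0.75 * t) * t * a\<^sup>2"
proof -
  define d where "d = exp t - 1"
  have d: "0 < d"
    using assms(2) by (simp add: d_def)
  have young: "2 * t * a * Y \<le> d * Y\<^sup>2 + t\<^sup>2 / d * a\<^sup>2"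
  proof -
    have "0 \<le> (d * Y - t * a)\<^sup>2 / d"
      using d by simp
    also have "\<dots> = d * Y\<^sup>2 + t\<^sup>2 / d * a\<^sup>2 - 2 * t * a * Y"
      using d by (simp add: power2_eq_square field_simps)
    finally show ?thesis
      by simp
  qed
  have "t * exp t = t * exp (t/4) * exp (0.75 * t)"
    by (simp add: mult.assoc flip: exp_add)
  also have "\<dots> \<le> t * exp (t/2) * exp (0.75 * t)"
    using assms(2) by (intro mult_right_mono mult_left_mono) auto
  also have "\<dots> \<le> d * exp (0.75 * t)"
    using mult_exp_half_le_exp_minus_one[of t] assms(2) by (simp add: d_def)
  finally have "t * exp t \<le> d * exp (0.75 * t)" .
  then have "t\<^sup>2 * (d + 1) \<le> exp (0.75 * t) * t * d"
    using assms(2) mult_left_mono[of "t * exp t" "d * exp (0.75 * t)" t] by (simp add: d_def power2_eq_square algebra_simps)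
  then have "t\<^sup>2 / d + t\<^sup>2 \<le> exp (0.75 * t) * t"
    using d by (simp add: field_simps)
  then have "(t\<^sup>2 / d + t\<^sup>2) * a\<^sup>2 \<le> exp (0.75 * t) * t * a\<^sup>2"
    by (simp add: mult_right_mono)
  then show ?thesis
    using young by (simp add: d_def power2_eq_square algebra_simps)
qed

lemma sqnorm_op_nonneg:
  assumes "linear R" and "pos_def_op R"
  shows "0 \<le> sqnorm_op R x"
  using assms by (cases "x = 0") (auto simp: pos_def_op_def sqnorm_op_def linear_0 less_imp_le)

lemma sqnorm_op_Cauchy_Schwarz:
  fixes R :: "'a::real_inner \<Rightarrow> 'a"
  assumes lin: "linear R" and sym: "\<And>x z. inner (R x) z = inner x (R z)"
    and pos: "pos_def_op R"
  shows "inner (R x) z \<le> sqrt (sqnorm_op R x) * sqrt (sqnorm_op R z)"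
proof -
  note nonneg = sqnorm_op_nonneg[OF lin pos]
  have zero: "v = 0" if "sqnorm_op R v = 0" for v
    using pos that by (auto simp: pos_def_op_def sqnorm_op_def)
  define s t where "s = sqrt (sqnorm_op R x)" and "t = sqrt (sqnorm_op R z)"
  have ss: "s * s = inner (R x) x" and tt: "t * t = inner (R z) z"
    using nonneg by (simp_all add: s_def t_def sqnorm_op_def)
  show ?thesis
  proof (cases "s = 0 \<or> t = 0")
    case True
    then have "x = 0 \<or> z = 0"
      using ss tt zero by (auto simp: sqnorm_op_def)
    then show ?thesis
      using lin by (auto simp: sqnorm_op_def linear_0)
  next
    case False
    then have "0 < s * t"
      using nonneg[of x] nonneg[of z] by (simp add: s_def t_def)
    have "inner (R z) x = inner (R x) z"
      using sym[of z x] by (simp add: inner_commute)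
    have "0 \<le> sqnorm_op R (t *\<^sub>R x - s *\<^sub>R z)"
      by (fact nonneg)
    also have "\<dots> = 2 * (s * t) * (s * t - inner (R x) z)"
      using \<open>inner (R z) x = inner (R x) z\<close>
      by (simp add: sqnorm_op_def linear_diff[OF lin] linear_scale[OF lin] inner_diff_left
          inner_diff_right flip: ss tt) (simp add: algebra_simps)
    finally have "inner (R x) z \<le> s * t"
      using \<open>0 < s * t\<close> by (simp add: zero_le_mult_iff)
    then show ?thesis
      by (simp add: s_def t_def)
  qed
qed

lemma pos_def_op_surj:
  fixes R :: "'a::euclidean_space \<Rightarrow> 'a"
  assumes lin: "linear R" and pos: "pos_def_op R"
  shows "surj R"
proof -
  have "inj R"
    unfolding linear_inj_iff_eq_0[OF lin]
    using pos by (auto simp: pos_def_op_def)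
  with lin show ?thesis
    by (rule eucl.linear_inj_imp_surj)
qed

lemma sqnorm_op_inv:
  fixes R :: "'a::euclidean_space \<Rightarrow> 'a"
  assumes "linear R" and "pos_def_op R"
  shows "sqnorm_op (inv R) \<phi> = sqnorm_op R (inv R \<phi>)"
  using pos_def_op_surj[OF assms] by (simp add: sqnorm_op_def surj_f_inv_f inner_commute)

lemma inner_le_sqnorm_op_inv:
  fixes R :: "'a::euclidean_space \<Rightarrow> 'a"
  assumes lin: "linear R" and sym: "\<And>x z. inner (R x) z = inner x (R z)"
    and pos: "pos_def_op R"
  shows "inner \<phi> v \<le> sqrt (sqnorm_op (inv R) \<phi>) * sqrt (sqnorm_op R v)"
  using sqnorm_op_Cauchy_Schwarz[OF lin sym pos, of "inv R \<phi>" v]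
    pos_def_op_surj[OF lin pos]
  by (simp add: sqnorm_op_inv[OF lin pos] surj_f_inv_f)

definition layer_energy :: "('a::real_inner \<Rightarrow> 'a) \<Rightarrow> ('a \<Rightarrow> 'a) \<Rightarrow> real \<Rightarrow> 'a \<Rightarrow> 'a \<Rightarrow> real" where
  "layer_energy A R \<tau> p q = sqnorm_op A ((1/2) *\<^sub>R (p + q)) + sqnorm_op R ((1/\<tau>) *\<^sub>R (p - q))"

lemma layer_energy_balance:
  fixes R A :: "'a::real_inner \<Rightarrow> 'a"
  assumes lR: "linear R" and lA: "linear A"
    and sR: "\<And>x z. inner (R x) z = inner x (R z)"
    and sA: "\<And>x z. inner (A x) z = inner x (A z)"
    and tau: "\<tau> \<noteq> 0"
    and scheme: "\<phi> = (1/\<tau>\<^sup>2) *\<^sub>R R (p - 2 *\<^sub>R q + r) + (1/4) *\<^sub>R A (p - 2 *\<^sub>R q + r) + A q"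
  shows "layer_energy A R \<tau> p q = layer_energy A R \<tau> q r + inner \<phi> (p - r)"
proof -
  have move: "inner x (R z) = inner (R x) z" "inner x (A z) = inner (A x) z" for x z
    using sR sA by simp_all
  have swap: "inner (R q) p = inner (R p) q" "inner (R r) p = inner (R p) r" "inner (R r) q = inner (R q) r"
    "inner (A q) p = inner (A p) q" "inner (A r) p = inner (A p) r" "inner (A r) q = inner (A q) r"
    using sR sA by (simp_all add: inner_commute)
  show ?thesis
    unfolding scheme layer_energy_def sqnorm_op_def
    by (simp add: linear_add[OF lR] linear_diff[OF lR] linear_scale[OF lR]
        linear_add[OF lA] linear_diff[OF lA] linear_scale[OF lA]
        inner_add_left inner_add_right inner_diff_left inner_diff_right move swap
        field_simps power2_eq_square tau)
qed

lemma layer_energy_estimate: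
  fixes R A :: "'a::euclidean_space \<Rightarrow> 'a"
  assumes lR: "linear R" and lA: "linear A"
    and sR: "\<And>x z. inner (R x) z = inner x (R z)"
    and sA: "\<And>x z. inner (A x) z = inner x (A z)"
    and R_pos: "pos_def_op R" and A_nonneg: "\<And>x. 0 \<le> sqnorm_op A x"
    and tau: "\<tau> > 0"
    and scheme: "\<phi> = (1/\<tau>\<^sup>2) *\<^sub>R R (p - 2 *\<^sub>R q + r) + (1/4) *\<^sub>R A (p - 2 *\<^sub>R q + r) + A q"
  shows "layer_energy A R \<tau> p q
           \<le> exp \<tau> * layer_energy A R \<tau> q r + exp (0.75 * \<tau>) * \<tau> * sqnorm_op (inv R) \<phi>"
proof -
  define E1 E0 where "E1 = layer_energy A R \<tau> p q" and "E0 = layer_energy A R \<tau> q r"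
  define v u where "v = (1/\<tau>) *\<^sub>R (p - q)" and "u = (1/\<tau>) *\<^sub>R (q - r)"
  define a where "a = sqrt (sqnorm_op (inv R) \<phi>)"
  note R_nonneg = sqnorm_op_nonneg[OF lR R_pos]
  have v: "sqnorm_op R v \<le> E1" and u: "sqnorm_op R u \<le> E0"
    using A_nonneg by (simp_all add: E1_def E0_def layer_energy_def v_def u_def)
  then have "0 \<le> E1" "0 \<le> E0"
    using R_nonneg order_trans by blast+
  have "0 \<le> a" "a\<^sup>2 = sqnorm_op (inv R) \<phi>"
    using R_nonneg[of "inv R \<phi>"] by (simp_all add: a_def sqnorm_op_inv[OF lR R_pos])
  have "inner \<phi> v \<le> a * sqrt E1" "inner \<phi> u \<le> a * sqrt E0"
    using inner_le_sqnorm_op_inv[OF lR sR R_pos, of \<phi>] v u \<open>0 \<le> a\<close>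
    by (metis a_def mult_left_mono real_sqrt_le_mono order_trans)+
  moreover have "E1 = E0 + \<tau> * inner \<phi> v + \<tau> * inner \<phi> u"
  proof -
    have "p - r = \<tau> *\<^sub>R v + \<tau> *\<^sub>R u"
      using tau by (simp add: v_def u_def algebra_simps)
    then show ?thesis
      using layer_energy_balance[OF lR lA sR sA _ scheme] tau
      by (simp add: E1_def E0_def inner_add_right)
  qed
  ultimately have "E1 \<le> E0 + \<tau> * (a * sqrt E1) + \<tau> * (a * sqrt E0)"
    using tau by (smt (verit) mult_left_mono)
  then have "(sqrt E1)\<^sup>2 \<le> (sqrt E0)\<^sup>2 + \<tau> * a * (sqrt E1 + sqrt E0)"
    using \<open>0 \<le> E1\<close> \<open>0 \<le> E0\<close> by (simp add: algebra_simps)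
  moreover have "0 \<le> \<tau> * a"
    using tau \<open>0 \<le> a\<close> by simp
  ultimately have "sqrt E1 \<le> sqrt E0 + \<tau> * a"
    using le_add_of_square_le real_sqrt_ge_zero \<open>0 \<le> E1\<close> \<open>0 \<le> E0\<close> by metis
  then have "(sqrt E1)\<^sup>2 \<le> (sqrt E0 + \<tau> * a)\<^sup>2"
    using real_sqrt_ge_zero[OF \<open>0 \<le> E1\<close>] by (rule power_mono)
  then have "E1 \<le> (sqrt E0 + \<tau> * a)\<^sup>2"
    using \<open>0 \<le> E1\<close> by simp
  also have "\<dots> \<le> exp \<tau> * E0 + exp (0.75 * \<tau>) * \<tau> * a\<^sup>2"
    using square_add_le_exp[of "sqrt E0" \<tau> a] \<open>0 \<le> E0\<close> tau by simp
  finally show ?thesis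
    by (simp add: E1_def E0_def \<open>a\<^sup>2 = sqnorm_op (inv R) \<phi>\<close>)
qed

lemma inner_adjoint_sum_sym:
  fixes A2 :: "'a::euclidean_space \<Rightarrow> 'a"
  assumes "linear A2"
  shows "inner (adjoint A2 x + A2 x) z = inner x (adjoint A2 z + A2 z)"
  using adjoint_works[OF assms, of x z] adjoint_works[OF assms, of z x]
  by (simp add: inner_add_left inner_add_right inner_commute)

lemma inner_R_op:
  fixes A1 A2 :: "'a::euclidean_space \<Rightarrow> 'a"
  assumes "linear A2" and "A1 = adjoint A2"
  shows "inner (R_op \<sigma> \<tau> A1 A2 x) z
           = inner x z + ((\<sigma> - 1/4) * \<tau>\<^sup>2) * inner (A1 x + A2 x) z
             + (\<sigma>\<^sup>2 * \<tau>^4) * inner (A2 x) (A2 z)"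
proof -
  have "inner (A1 (A2 x)) z = inner (A2 x) (A2 z)"
    using adjoint_works[OF assms(1), of z "A2 x"] assms(2) by (simp add: inner_commute)
  then show ?thesis
    by (simp add: R_op_def inner_add_left)
qed

lemma R_op_symmetric:
  fixes A1 A2 :: "'a::euclidean_space \<Rightarrow> 'a"
  assumes "linear A2" and "A1 = adjoint A2"
  shows "inner (R_op \<sigma> \<tau> A1 A2 x) z = inner x (R_op \<sigma> \<tau> A1 A2 z)"
  using inner_R_op[OF assms, of \<sigma> \<tau> x z] inner_R_op[OF assms, of \<sigma> \<tau> z x]
    inner_adjoint_sum_sym[OF assms(1), of x z] assms(2)
  by (simp add: inner_commute)

lemma R_op_ge_id:
  fixes A1 A2 :: "'a::euclidean_space \<Rightarrow> 'a"
  assumes "linear A2" and "A1 = adjoint A2"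
    and "\<sigma> \<ge> 1/4" and "\<And>x. 0 \<le> inner (A1 x + A2 x) x"
  shows "op_ge (R_op \<sigma> \<tau> A1 A2) id"
  unfolding op_ge_def
proof
  fix x
  have "0 \<le> ((\<sigma> - 1/4) * \<tau>\<^sup>2) * inner (A1 x + A2 x) x"
    using assms(3,4) by simp
  then show "inner (id x) x \<le> inner (R_op \<sigma> \<tau> A1 A2 x) x"
    by (simp add: inner_R_op[OF assms(1,2)])
qed

lemma linear_R_op:
  assumes "linear A1" and "linear A2"
  shows "linear (R_op \<sigma> \<tau> A1 A2)"
  by (rule linearI) (simp_all add: R_op_def linear_add[OF assms(1)] linear_add[OF assms(2)]
      linear_scale[OF assms(1)] linear_scale[OF assms(2)] algebra_simps)

lemma G_op_scaled_eq:
  assumes "linear A1" and "linear A2" and "\<tau> \<noteq> 0"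
  shows "G_op \<sigma> \<tau> A1 A2 ((1/\<tau>\<^sup>2) *\<^sub>R D)
           = (1/\<tau>\<^sup>2) *\<^sub>R R_op \<sigma> \<tau> A1 A2 D + (1/4) *\<^sub>R (A1 D + A2 D)"
proof -
  have "G_op \<sigma> \<tau> A1 A2 v = R_op \<sigma> \<tau> A1 A2 v + (\<tau>\<^sup>2 / 4) *\<^sub>R (A1 v + A2 v)" for v
    by (simp add: G_op_def R_op_def Let_def linear_add[OF assms(1)] linear_scale[OF assms(1)]
        algebra_simps power2_eq_square power4_eq_xxxx)
  then show ?thesis
    using assms(3)
    by (simp add: linear_scale[OF linear_R_op[OF assms(1,2)]] linear_scale[OF assms(1)]
        linear_scale[OF assms(2)] scaleR_add_right)
qed

lemma energy_eq_layer_energy: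
  "energy \<sigma> \<tau> A1 A2 y n = layer_energy (\<lambda>v. A1 v + A2 v) (R_op \<sigma> \<tau> A1 A2) \<tau> (y n) (y (n - 1))"
  by (simp add: energy_def layer_energy_def)

theorem theorem4:
  fixes A1 A2 :: "'a::euclidean_space \<Rightarrow> 'a"
    and \<sigma> \<tau> :: real
    and y \<phi> :: "nat \<Rightarrow> 'a"
  assumes lin1: "linear A1" and lin2: "linear A2"
    and adj: "A1 = adjoint A2"
    and A_sa: "adjoint (\<lambda>v. A1 v + A2 v) = (\<lambda>v. A1 v + A2 v)"
    and A_pos: "pos_def_op (\<lambda>v. A1 v + A2 v)"
    and sigma: "\<sigma> \<ge> 1/4" and tau: "\<tau> > 0"
    and scheme: "\<And>n. n \<ge> 1 \<Longrightarrow>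
        G_op \<sigma> \<tau> A1 A2 ((1 / \<tau>^2) *\<^sub>R (y (n+1) - 2 *\<^sub>R y n + y (n - 1)))
          + (A1 (y n) + A2 (y n)) = \<phi> n"
  shows "adjoint (R_op \<sigma> \<tau> A1 A2) = R_op \<sigma> \<tau> A1 A2
       \<and> op_ge (R_op \<sigma> \<tau> A1 A2) id
       \<and> (\<forall>n\<ge>1. energy \<sigma> \<tau> A1 A2 y (n+1)
              \<le> exp \<tau> * energy \<sigma> \<tau> A1 A2 y n
                + exp (0.75 * \<tau>) * \<tau> * sqnorm_op (inv (R_op \<sigma> \<tau> A1 A2)) (\<phi> n))"
proof -
  define A R where "A = (\<lambda>v. A1 v + A2 v)" and "R = R_op \<sigma> \<tau> A1 A2"
  have lA: "linear A" and lR: "linear R"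
    using lin1 lin2 by (simp_all add: A_def R_def linear_compose_add linear_R_op)
  have sA: "inner (A x) z = inner x (A z)" and sR: "inner (R x) z = inner x (R z)" for x z
    using inner_adjoint_sum_sym[OF lin2] R_op_symmetric[OF lin2 adj]
    by (simp_all add: A_def R_def adj)
  have A_nonneg: "0 \<le> sqnorm_op A x" for x
    using sqnorm_op_nonneg[OF lA] A_pos by (simp add: A_def)
  have R_ge: "op_ge R id"
    using R_op_ge_id[OF lin2 adj sigma] A_nonneg by (simp add: R_def A_def sqnorm_op_def)
  then have R_pos: "pos_def_op R"
    unfolding op_ge_def pos_def_op_def by (metis id_apply inner_gt_zero_iff less_le_trans)
  have "adjoint R = R"
    by (rule adjoint_unique) (simp add: sR)
  moreover have "energy \<sigma> \<tau> A1 A2 y (n+1) \<le> exp \<tau> * energy \<sigma> \<tau> A1 A2 y n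
                   + exp (0.75 * \<tau>) * \<tau> * sqnorm_op (inv R) (\<phi> n)" if "n \<ge> 1" for n
  proof -
    define D where "D = y (n+1) - 2 *\<^sub>R y n + y (n - 1)"
    have "\<phi> n = (1/\<tau>\<^sup>2) *\<^sub>R R D + (1/4) *\<^sub>R A D + A (y n)"
      using scheme[OF that] G_op_scaled_eq[OF lin1 lin2, of \<tau> \<sigma> D] tau
      by (simp add: A_def R_def D_def)
    from layer_energy_estimate[OF lR lA sR sA R_pos A_nonneg tau this[unfolded D_def]]
    show ?thesis
      using that by (simp add: energy_eq_layer_energy A_def R_def)
  qed
  ultimately show ?thesis
    using R_ge unfolding R_def by blast
qed

end
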